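(* Let $\omega\in\mathbb{F}_8$ be a root of $y^3+y+1$, let $m\in\mathbb{N}$, let $\emptyset\neq L\subsetneq[m]$, and let $D=\Delta_L+\omega\Delta_L+\omega^2\Delta_L\subseteq\mathbb{F}_8^m$ and $D^*=D\setminus\{0\}$. Then $C_{D^*}$ is a $1$-weight linear code over $\mathbb{F}_8$ of length $2^{3|L|}-1$, dimension $|L|$ and minimum distance $7\cdot2^{3(|L|-1)}$. In particular it is a minimal code. Moreover, $C_{D^*}$ is a Griesmer code and hence distance optimal. If $A_i$ denotes the number of codewords of weight $i$ and $Z_i=|\{v\in\mathbb{F}_8^m: wt(c_{D^*}(v))=i\}|$ for $0\le i\le|D^*|$, then $Z_0=2^{3(m-|L|)}$ and $Z_i=Z_0A_i$.
   Context: $[m]=\{1,\dots,m\}$; $\Delta_L=\{w\in\mathbb{F}_2^m:\{i:w_i\ne0\}\subseteq L\}$. $A+\omega B+\omega^2C=\{a+\omega b+\omega^2 c: a\in A,b\in B,c\in C\}$. For an ordered finite set $P\subseteq\mathbb{F}_8^m$, $c_P(v)=(v\cdot d)_{d\in P}$ and $C_P=\{c_P(v):v\in\mathbb{F}_8^m\}$. A code is $1$-weight if all nonzero codewords have the same Hamming weight. A nonzero codeword $c$ is minimal if every nonzero codeword $c'$ with $\mathrm{Supp}(c')\subseteq\mathrm{Supp}(c)$ is a scalar multiple of $c$; a minimal code is one all of whose nonzero codewords are minimal. An $[n,k,d]$ code over $\mathbb{F}_q$ is Griesmer if $\sum_{i=0}^{k-1}\lceil d/q^i\rceil=n$; it is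 distance optimal if no $[n,k,d+1]$ linear code over $\mathbb{F}_q$ exists. *)

theory Defs
  imports "HOL-Analysis.Analysis" "HOL-Library.Function_Algebras"
begin

text \<open>Vectors of F^m are elements of 'a ^ 'n, where the finite index type 'n plays the
  role of [m] (so m = CARD('n)). The binary field F_2 is the prime subfield {0,1}.\<close>

definition dotp :: "'a::comm_ring_1 ^ 'n \<Rightarrow> 'a ^ 'n \<Rightarrow> 'a" where
  "dotp v d = (\<Sum>i\<in>UNIV. v $ i * d $ i)"

definition Delta :: "'n set \<Rightarrow> ('a::comm_ring_1 ^ 'n) set" where
  "Delta L = {w. (\<forall>i. w $ i \<in> {0, 1}) \<and> {i. w $ i \<noteq> 0} \<subseteq> L}"

definition sum3 :: "'a::comm_ring_1 \<Rightarrow> ('a ^ 'n) set \<Rightarrow> ('a ^ 'n) set \<Rightarrow> ('a ^ 'n) set \<Rightarrow> ('a ^ 'n) set" where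
  "sum3 \<omega> A B C = {(\<chi> i. a $ i + \<omega> * b $ i + \<omega>^2 * c $ i) | a b c. a \<in> A \<and> b \<in> B \<and> c \<in> C}"

text \<open>Words of length n are functions nat => 'a vanishing from position n on.\<close>

definition word_scale :: "'a::field \<Rightarrow> (nat \<Rightarrow> 'a) \<Rightarrow> (nat \<Rightarrow> 'a)" where
  "word_scale c v = (\<lambda>i. c * v i)"

definition linear_code :: "nat \<Rightarrow> (nat \<Rightarrow> 'a::field) set \<Rightarrow> bool" where
  "linear_code n C \<longleftrightarrow> C \<subseteq> {c. \<forall>i\<ge>n. c i = 0} \<and> 0 \<in> C \<and>
     (\<forall>x\<in>C. \<forall>y\<in>C. x + y \<in> C) \<and> (\<forall>a. \<forall>x\<in>C. word_scale a x \<in> C)"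

definition code_dim :: "(nat \<Rightarrow> 'a::field) set \<Rightarrow> nat" where
  "code_dim C = vector_space.dim word_scale C"

definition hamming_wt :: "(nat \<Rightarrow> 'a::zero) \<Rightarrow> nat" where
  "hamming_wt c = card {i. c i \<noteq> 0}"

definition hamming_dist :: "(nat \<Rightarrow> 'a) \<Rightarrow> (nat \<Rightarrow> 'a) \<Rightarrow> nat" where
  "hamming_dist c c' = card {i. c i \<noteq> c' i}"

definition min_dist :: "(nat \<Rightarrow> 'a) set \<Rightarrow> nat" where
  "min_dist C = Min {hamming_dist c c' | c c'. c \<in> C \<and> c' \<in> C \<and> c \<noteq> c'}"

definition code_supp :: "(nat \<Rightarrow> 'a::zero) \<Rightarrow> nat set" where
  "code_supp c = {i. c i \<noteq> 0}"

definition one_weight :: "(nat \<Rightarrow> 'a::zero) set \<Rightarrow> bool" where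
  "one_weight C \<longleftrightarrow> (\<exists>w. \<forall>c\<in>C. c \<noteq> 0 \<longrightarrow> hamming_wt c = w)"

definition minimal_codeword :: "(nat \<Rightarrow> 'a::field) set \<Rightarrow> (nat \<Rightarrow> 'a) \<Rightarrow> bool" where
  "minimal_codeword C c \<longleftrightarrow> c \<in> C \<and> c \<noteq> 0 \<and>
     (\<forall>c'\<in>C. c' \<noteq> 0 \<and> code_supp c' \<subseteq> code_supp c \<longrightarrow> (\<exists>a. c' = word_scale a c))"

definition minimal_code :: "(nat \<Rightarrow> 'a::field) set \<Rightarrow> bool" where
  "minimal_code C \<longleftrightarrow> (\<forall>c\<in>C. c \<noteq> 0 \<longrightarrow> minimal_codeword C c)"

definition is_nkd_code :: "nat \<Rightarrow> nat \<Rightarrow> nat \<Rightarrow> (nat \<Rightarrow> 'a::field) set \<Rightarrow> bool" where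
  "is_nkd_code n k d C \<longleftrightarrow> linear_code n C \<and> code_dim C = k \<and> min_dist C = d"

definition griesmer_code :: "nat \<Rightarrow> nat \<Rightarrow> nat \<Rightarrow> (nat \<Rightarrow> 'a::{field,finite}) set \<Rightarrow> bool" where
  "griesmer_code n k d C \<longleftrightarrow> is_nkd_code n k d C \<and>
     (\<Sum>i<k. \<lceil>real d / real (CARD('a)) ^ i\<rceil>) = int n"

definition distance_optimal :: "nat \<Rightarrow> nat \<Rightarrow> nat \<Rightarrow> (nat \<Rightarrow> 'a::field) set \<Rightarrow> bool" where
  "distance_optimal n k d C \<longleftrightarrow> is_nkd_code n k d C \<and>
     \<not> (\<exists>C' :: (nat \<Rightarrow> 'a) set. is_nkd_code n k (d + 1) C')"

text \<open>For an ordered finite set P (a distinct list), c_P(v) = (v . d)_{d in P}.\<close>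
definition cP :: "('a::comm_ring_1 ^ 'n) list \<Rightarrow> 'a ^ 'n \<Rightarrow> (nat \<Rightarrow> 'a)" where
  "cP P v = (\<lambda>i. if i < length P then dotp v (P ! i) else 0)"

definition CP :: "('a::comm_ring_1 ^ 'n) list \<Rightarrow> (nat \<Rightarrow> 'a) set" where
  "CP P = range (cP P)"

end

theory Submission
  imports Defs
begin

(* Since omega is a root of the irreducible cubic y^3 + y + 1, the elements 1, omega, omega^2 form
   a basis of F_8 over F_2, so D is the whole coordinate subspace F_8^L and C_{D*} is a simplex code.
   Over any finite field F_q: if v does not vanish on L, the hyperplane v.d = 0 meets F_q^L in
   q^(|L|-1) points, so every nonzero codeword has weight (q-1) q^(|L|-1). A one-weight linear code is
   minimal, the Griesmer sum of these parameters telescopes to the length q^|L| - 1, and the Plotkin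
   bound (the minimum distance is at most the average nonzero weight) excludes a code of the same
   length and dimension with larger distance. Finally v |-> c_{D*}(v) is additive with kernel
   F_q^([m] - L), so every weight class of vectors v is the kernel times a weight class of codewords. *)

section \<open>Fibres of additive maps\<close>

lemma card_fiber_additive:
  fixes f :: "'a::ab_group_add \<Rightarrow> 'b::ab_group_add"
  assumes add_closed: "\<And>x y. x \<in> G \<Longrightarrow> y \<in> G \<Longrightarrow> x + y \<in> G"
    and diff_closed: "\<And>x y. x \<in> G \<Longrightarrow> y \<in> G \<Longrightarrow> x - y \<in> G"
    and additive: "\<And>x y. f (x + y) = f x + f y"
    and "x0 \<in> G"
  shows "card {x \<in> G. f x = f x0} = card {x \<in> G. f x = 0}"
proof -
  have f_diff: "f (x - y) = f x - f y" for x y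
    using additive[of "x - y" y] by (simp add: algebra_simps)
  have "bij_betw (\<lambda>x. x - x0) {x \<in> G. f x = f x0} {x \<in> G. f x = 0}"
    by (rule bij_betw_byWitness[where f'="\<lambda>x. x + x0"])
       (use \<open>x0 \<in> G\<close> in \<open>auto simp: f_diff additive add_closed diff_closed\<close>)
  then show ?thesis
    by (rule bij_betw_same_card)
qed

lemma card_preimage_additive:
  fixes f :: "'a::ab_group_add \<Rightarrow> 'b::ab_group_add"
  assumes "finite G"
    and "\<And>x y. x \<in> G \<Longrightarrow> y \<in> G \<Longrightarrow> x + y \<in> G"
    and "\<And>x y. x \<in> G \<Longrightarrow> y \<in> G \<Longrightarrow> x - y \<in> G"
    and "\<And>x y. f (x + y) = f x + f y"
  shows "card {x \<in> G. f x \<in> S} = card {x \<in> G. f x = 0} * card (S \<inter> f ` G)"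
proof -
  let ?H = "{x \<in> G. f x \<in> S}"
  have "card ?H = (\<Sum>y\<in>f ` ?H. card {x \<in> ?H. f x = y})"
    using sum.image_gen[of ?H "\<lambda>_. 1::nat" f] \<open>finite G\<close> by simp
  also have "\<dots> = (\<Sum>y\<in>S \<inter> f ` G. card {x \<in> G. f x = 0})"
  proof (rule sum.cong)
    fix y assume "y \<in> S \<inter> f ` G"
    then obtain x0 where "x0 \<in> G" "y = f x0" "y \<in> S" by blast
    then have "{x \<in> ?H. f x = y} = {x \<in> G. f x = f x0}"
      by auto
    then show "card {x \<in> ?H. f x = y} = card {x \<in> G. f x = 0}"
      using card_fiber_additive[of G f x0] assms \<open>x0 \<in> G\<close> by simp
  qed auto
  finally show ?thesis
    by simp
qed

section \<open>Coordinate subspaces\<close>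

lemma dotp_add_left: "dotp (u + v) d = dotp u d + dotp v d"
  unfolding dotp_def by (simp add: distrib_right sum.distrib)

lemma dotp_add_right: "dotp v (d + e) = dotp v d + dotp v e"
  unfolding dotp_def by (simp add: distrib_left sum.distrib)

lemma dotp_smult_left: "dotp (c *s v) d = c * dotp v d"
  unfolding dotp_def by (simp add: sum_distrib_left mult.assoc)

lemma dotp_0 [simp]: "dotp 0 d = 0" "dotp v 0 = 0"
  unfolding dotp_def by simp_all

lemma dotp_axis_right: "dotp v (axis j x) = v $ j * x"
  unfolding dotp_def axis_def by (simp add: if_distrib cong: if_cong)

definition coord_subspace :: "'n set \<Rightarrow> ('a::zero ^ 'n) set" where
  "coord_subspace L = {v. \<forall>i. i \<notin> L \<longrightarrow> v $ i = 0}"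

lemma card_coord_subspace:
  "card (coord_subspace L :: ('a::{zero,finite} ^ 'n) set) = CARD('a) ^ card L"
proof -
  have "bij_betw (\<lambda>v::'a^'n. restrict (\<lambda>i. v $ i) L) (coord_subspace L) (PiE L (\<lambda>_. UNIV))"
    by (rule bij_betw_byWitness[where f'="\<lambda>f. \<chi> i. if i \<in> L then f i else 0"])
       (auto simp: coord_subspace_def vec_eq_iff PiE_def extensional_def)
  then show ?thesis
    by (simp add: bij_betw_same_card card_PiE)
qed

lemma dotp_coord_subspace_eq_0:
  assumes "\<forall>j\<in>L. v $ j = 0" and "d \<in> coord_subspace L"
  shows "dotp v d = 0"
  unfolding dotp_def
proof (rule sum.neutral, rule ballI)
  fix i show "v $ i * d $ i = 0"
    using assms by (cases "i \<in> L") (auto simp: coord_subspace_def)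
qed

lemma card_coord_subspace_dotp_neq_0:
  fixes v :: "'a::{field,finite} ^ 'n"
  assumes "j \<in> L" and "v $ j \<noteq> 0"
  shows "card {d \<in> coord_subspace L. dotp v d \<noteq> 0} = (CARD('a) - 1) * CARD('a) ^ (card L - 1)"
proof -
  let ?G = "coord_subspace L :: ('a ^ 'n) set"
  let ?K = "card {d \<in> ?G. dotp v d = 0}"
  have "axis j (t / v $ j) \<in> ?G" for t
    using assms by (auto simp: coord_subspace_def axis_def)
  moreover have "dotp v (axis j (t / v $ j)) = t" for t
    using assms by (simp add: dotp_axis_right)
  ultimately have onto: "dotp v ` ?G = UNIV"
    by (metis UNIV_eq_I image_eqI)
  have count: "card {d \<in> ?G. dotp v d \<in> S} = ?K * card S" for S
    using card_preimage_additive[of ?G "dotp v" S] onto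
    by (simp add: coord_subspace_def dotp_add_right)
  have "CARD('a) ^ card L = ?K * CARD('a)"
    using count[of UNIV] by (simp add: card_coord_subspace)
  moreover have "CARD('a) ^ card L = CARD('a) ^ (card L - 1) * CARD('a)"
    using \<open>j \<in> L\<close> by (metis card_gt_0_iff empty_iff finite power_minus_mult)
  ultimately have "?K = CARD('a) ^ (card L - 1)"
    by simp
  then show ?thesis
    using count[of "UNIV - {0}"] by simp
qed

section \<open>Linear codes\<close>

lemma CARD_field_ge_2: "CARD('a::{field,finite}) \<ge> 2"
proof -
  have "card {0, 1::'a} \<le> CARD('a)"
    by (rule card_mono) auto
  then show ?thesis
    by simp
qed

global_interpretation word: vector_space "word_scale :: 'a::field \<Rightarrow> (nat \<Rightarrow> 'a) \<Rightarrow> (nat \<Rightarrow> 'a)"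
  by unfold_locales (auto simp: word_scale_def fun_eq_iff algebra_simps)

lemma linear_code_add: "linear_code n C \<Longrightarrow> x \<in> C \<Longrightarrow> y \<in> C \<Longrightarrow> x + y \<in> C"
  unfolding linear_code_def by blast

lemma linear_code_scale: "linear_code n C \<Longrightarrow> x \<in> C \<Longrightarrow> word_scale a x \<in> C"
  unfolding linear_code_def by blast

lemma linear_code_zero: "linear_code n C \<Longrightarrow> 0 \<in> C"
  unfolding linear_code_def by blast

lemma linear_code_vanishes: "linear_code n C \<Longrightarrow> c \<in> C \<Longrightarrow> n \<le> i \<Longrightarrow> c i = 0"
  unfolding linear_code_def by blast

lemma linear_code_diff:
  fixes C :: "(nat \<Rightarrow> 'a::field) set"
  assumes "linear_code n C" "x \<in> C" "y \<in> C"
  shows "x - y \<in> C"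
proof -
  have "x - y = x + word_scale (-1) y"
    by (simp add: word_scale_def fun_eq_iff)
  then show ?thesis
    using assms by (metis linear_code_add linear_code_scale)
qed

lemma linear_code_subspace: "linear_code n C \<Longrightarrow> word.subspace C"
  unfolding linear_code_def word.subspace_def by blast

lemma linear_code_finite:
  fixes C :: "(nat \<Rightarrow> 'a::{field,finite}) set"
  assumes "linear_code n C"
  shows "finite C"
proof (rule finite_subset)
  show "C \<subseteq> {c. \<forall>i. (i \<in> {..<n} \<longrightarrow> c i \<in> UNIV) \<and> (i \<notin> {..<n} \<longrightarrow> c i = 0)}"
    using assms by (auto simp: linear_code_def)
  show "finite {c::nat \<Rightarrow> 'a. \<forall>i. (i \<in> {..<n} \<longrightarrow> c i \<in> UNIV) \<and> (i \<notin> {..<n} \<longrightarrow> c i = 0)}"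
    by (rule finite_set_of_finite_funs) auto
qed

lemma linear_code_supp_subset: "linear_code n C \<Longrightarrow> c \<in> C \<Longrightarrow> code_supp c \<subseteq> {..<n}"
  by (auto simp: code_supp_def) (meson linear_code_vanishes not_le)

lemma card_span_independent:
  fixes B :: "(nat \<Rightarrow> 'a::{field,finite}) set"
  assumes "finite B" and "word.independent B"
  shows "card (word.span B) = CARD('a) ^ card B"
proof -
  let ?comb = "\<lambda>u. \<Sum>b\<in>B. word_scale (u b) b"
  have comb_restrict: "?comb u = ?comb (restrict u B)" for u
    by (rule sum.cong) auto
  have "range ?comb = ?comb ` (B \<rightarrow>\<^sub>E UNIV)"
  proof (intro subset_antisym subsetI)
    fix x assume "x \<in> range ?comb"
    then obtain u where "x = ?comb (restrict u B)"
      using comb_restrict by auto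
    moreover have "restrict u B \<in> B \<rightarrow>\<^sub>E UNIV"
      by simp
    ultimately show "x \<in> ?comb ` (B \<rightarrow>\<^sub>E UNIV)"
      by blast
  qed auto
  then have "word.span B = ?comb ` (B \<rightarrow>\<^sub>E UNIV)"
    using word.span_finite[OF \<open>finite B\<close>] by simp
  moreover have "inj_on ?comb (B \<rightarrow>\<^sub>E UNIV)"
  proof (rule inj_onI)
    fix u u' assume u: "u \<in> B \<rightarrow>\<^sub>E UNIV" and u': "u' \<in> B \<rightarrow>\<^sub>E UNIV" and "?comb u = ?comb u'"
    then have "(\<Sum>b\<in>B. word_scale (u b - u' b) b) = 0"
      by (simp add: word.scale_left_diff_distrib sum_subtractf)
    then have "\<forall>b\<in>B. u b - u' b = 0"
      using word.independentD[OF assms(2,1) order_refl, where u="\<lambda>b. u b - u' b"] by blast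
    then show "u = u'"
      using u u' by (fastforce simp: PiE_def extensional_def fun_eq_iff)
  qed
  ultimately show ?thesis
    using \<open>finite B\<close> by (simp add: card_image card_PiE)
qed

lemma card_linear_code:
  fixes C :: "(nat \<Rightarrow> 'a::{field,finite}) set"
  assumes "linear_code n C"
  shows "card C = CARD('a) ^ code_dim C"
proof -
  obtain B where B: "B \<subseteq> C" "word.independent B" "C \<subseteq> word.span B" "card B = word.dim C"
    by (rule word.basis_exists)
  have "word.span B = C"
    using B linear_code_subspace[OF assms] by (simp add: word.span_minimal subset_antisym)
  moreover have "finite B"
    using B(1) linear_code_finite[OF assms] by (rule finite_subset)
  ultimately show ?thesis
    using card_span_independent[OF _ B(2)] B(4) by (simp add: code_dim_def)
qed

lemma hamming_dist_eq_hamming_wt: "hamming_dist c c' = hamming_wt (c - (c' :: nat \<Rightarrow> 'a::ab_group_add))"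
  unfolding hamming_dist_def hamming_wt_def by simp

lemma card_linear_code_coord_neq_0:
  fixes C :: "(nat \<Rightarrow> 'a::{field,finite}) set"
  assumes code: "linear_code n C"
  shows "CARD('a) * card {c \<in> C. c i \<noteq> 0} \<le> (CARD('a) - 1) * card C"
proof (cases "\<exists>c0\<in>C. c0 i \<noteq> 0")
  case False
  then have "{c \<in> C. c i \<noteq> 0} = {}"
    by auto
  then show ?thesis
    by (simp only: card.empty mult_0_right zero_le)
next
  case True
  then obtain c0 where c0: "c0 \<in> C" "c0 i \<noteq> 0"
    by blast
  have "word_scale (t / c0 i) c0 \<in> C" for t
    using c0 linear_code_scale[OF code] by blast
  moreover have "word_scale (t / c0 i) c0 i = t" for t
    using c0 by (simp add: word_scale_def)
  ultimately have onto: "(\<lambda>c. c i) ` C = UNIV"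
    by (metis UNIV_eq_I image_eqI)
  have count: "card {c \<in> C. c i \<in> S} = card {c \<in> C. c i = 0} * card S" for S
    using card_preimage_additive[where G=C and f="\<lambda>c. c i" and S=S] onto
      linear_code_finite[OF code] linear_code_add[OF code] linear_code_diff[OF code]
    by simp
  from count[of UNIV] count[of "UNIV - {0}"] show ?thesis
    by simp
qed

lemma sum_hamming_wt_linear_code_le:
  fixes C :: "(nat \<Rightarrow> 'a::{field,finite}) set"
  assumes code: "linear_code n C"
  shows "CARD('a) * (\<Sum>c\<in>C. hamming_wt c) \<le> n * ((CARD('a) - 1) * card C)"
proof -
  have "hamming_wt c = card {i \<in> {..<n}. c i \<noteq> 0}" if "c \<in> C" for c
    using linear_code_supp_subset[OF code that]
    unfolding hamming_wt_def code_supp_def by (metis (no_types, lifting) Collect_cong mem_Collect_eq subsetD)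
  then have "(\<Sum>c\<in>C. hamming_wt c) = (\<Sum>c\<in>C. card {i \<in> {..<n}. c i \<noteq> 0})"
    by simp
  also have "\<dots> = (\<Sum>i<n. card {c \<in> C. c i \<noteq> 0})"
    by (rule sum_multicount_gen[OF linear_code_finite[OF code]]) auto
  finally have "CARD('a) * (\<Sum>c\<in>C. hamming_wt c) = (\<Sum>i<n. CARD('a) * card {c \<in> C. c i \<noteq> 0})"
    by (simp add: sum_distrib_left)
  also have "\<dots> \<le> (\<Sum>i<n. (CARD('a) - 1) * card C)"
    by (rule sum_mono) (rule card_linear_code_coord_neq_0[OF code])
  finally show ?thesis
    by simp
qed

lemma min_dist_le_hamming_wt:
  fixes C :: "(nat \<Rightarrow> 'a::{field,finite}) set"
  assumes code: "linear_code n C" and "c \<in> C" "c \<noteq> 0"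
  shows "min_dist C \<le> hamming_wt c"
proof -
  let ?D = "{hamming_dist c c' | c c'. c \<in> C \<and> c' \<in> C \<and> c \<noteq> c'}"
  have "?D \<subseteq> (\<lambda>(x, y). hamming_dist x y) ` (C \<times> C)"
    by auto
  then have "finite ?D"
    by (rule finite_subset) (simp add: linear_code_finite[OF code])
  moreover have "hamming_dist c 0 \<in> ?D"
    using assms linear_code_zero[OF code] by blast
  ultimately show ?thesis
    by (simp add: min_dist_def hamming_dist_eq_hamming_wt)
qed

text \<open>The minimum distance is at most the average weight of a nonzero codeword.\<close>
lemma plotkin_bound:
  fixes C :: "(nat \<Rightarrow> 'a::{field,finite}) set"
  assumes code: "linear_code n C"
  shows "CARD('a) * ((card C - 1) * min_dist C) \<le> n * ((CARD('a) - 1) * card C)"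
proof -
  have fin: "finite C" and "0 \<in> C"
    using linear_code_finite[OF code] linear_code_zero[OF code] .
  then have "(card C - 1) * min_dist C = (\<Sum>c\<in>C - {0}. min_dist C)"
    by simp
  also have "\<dots> \<le> (\<Sum>c\<in>C - {0}. hamming_wt c)"
    by (rule sum_mono) (auto intro: min_dist_le_hamming_wt[OF code])
  also have "\<dots> \<le> (\<Sum>c\<in>C. hamming_wt c)"
    by (rule sum_mono2[OF fin]) auto
  finally have "CARD('a) * ((card C - 1) * min_dist C) \<le> CARD('a) * (\<Sum>c\<in>C. hamming_wt c)"
    by simp
  also have "\<dots> \<le> n * ((CARD('a) - 1) * card C)"
    by (rule sum_hamming_wt_linear_code_le[OF code])
  finally show ?thesis .
qed

lemma min_dist_one_weight:
  fixes C :: "(nat \<Rightarrow> 'a::field) set"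
  assumes code: "linear_code n C"
    and wt: "\<And>c. c \<in> C \<Longrightarrow> c \<noteq> 0 \<Longrightarrow> hamming_wt c = w"
    and "c0 \<in> C" "c0 \<noteq> 0"
  shows "min_dist C = w"
proof -
  have "{hamming_dist c c' | c c'. c \<in> C \<and> c' \<in> C \<and> c \<noteq> c'} = {w}"
  proof (intro subset_antisym subsetI)
    fix x assume "x \<in> {hamming_dist c c' | c c'. c \<in> C \<and> c' \<in> C \<and> c \<noteq> c'}"
    then obtain c c' where "x = hamming_dist c c'" "c \<in> C" "c' \<in> C" "c \<noteq> c'"
      by blast
    then show "x \<in> {w}"
      using wt[of "c - c'"] linear_code_diff[OF code] by (simp add: hamming_dist_eq_hamming_wt)
  next
    fix x assume "x \<in> {w}"
    then have "x = hamming_dist c0 0"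
      using wt assms(3,4) by (simp add: hamming_dist_eq_hamming_wt)
    then show "x \<in> {hamming_dist c c' | c c'. c \<in> C \<and> c' \<in> C \<and> c \<noteq> c'}"
      using assms(3,4) linear_code_zero[OF code] by blast
  qed
  then show ?thesis
    by (simp add: min_dist_def)
qed

text \<open>If the support of c' lies in that of c and i is in the support of c, then c' - (c' i / c i) c
  is a codeword of smaller weight than c, so it vanishes.\<close>
lemma minimal_code_if_one_weight:
  fixes C :: "(nat \<Rightarrow> 'a::field) set"
  assumes code: "linear_code n C" and "one_weight C"
  shows "minimal_code C"
proof -
  obtain w where wt: "\<And>c. c \<in> C \<Longrightarrow> c \<noteq> 0 \<Longrightarrow> hamming_wt c = w"
    using assms(2) by (auto simp: one_weight_def)
  have "\<exists>a. c' = word_scale a c"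
    if c: "c \<in> C" "c \<noteq> 0" and c': "c' \<in> C" "code_supp c' \<subseteq> code_supp c" for c c'
  proof -
    obtain i where i: "c i \<noteq> 0"
      using \<open>c \<noteq> 0\<close> by (auto simp: fun_eq_iff)
    define a where "a = c' i / c i"
    let ?d = "c' - word_scale a c"
    have "?d \<in> C"
      using c c' linear_code_diff[OF code] linear_code_scale[OF code] by blast
    have fin: "finite (code_supp c)"
      using linear_code_supp_subset[OF code c(1)] by (rule finite_subset) simp
    have "card (code_supp ?d) \<le> card (code_supp c - {i})"
      using c'(2) i fin by (intro card_mono) (auto simp: code_supp_def word_scale_def a_def)
    also have "\<dots> < card (code_supp c)"
      using i by (intro card_Diff1_less[OF fin]) (simp add: code_supp_def)
    finally have "card (code_supp ?d) < card (code_supp c)" .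
    then have "hamming_wt ?d \<noteq> w"
      using wt[OF c] by (simp add: hamming_wt_def code_supp_def)
    then have "?d = 0"
      using wt \<open>?d \<in> C\<close> by blast
    then show ?thesis
      by (metis right_minus_eq)
  qed
  then show ?thesis
    by (auto simp: minimal_code_def minimal_codeword_def)
qed

lemma griesmer_sum_simplex:
  fixes q k :: nat
  assumes "q > 0"
  shows "(\<Sum>i<k. \<lceil>real ((q - 1) * q ^ (k - 1)) / real q ^ i\<rceil>) = int (q ^ k - 1)"
proof -
  have "\<lceil>real ((q - 1) * q ^ (k - 1)) / real q ^ i\<rceil> = int ((q - 1) * q ^ (k - Suc i))"
    if "i < k" for i
  proof -
    have "q ^ (k - 1) = q ^ (k - Suc i) * q ^ i"
      using that by (simp flip: power_add)
    then have "real ((q - 1) * q ^ (k - 1)) / real q ^ i = real ((q - 1) * q ^ (k - Suc i))"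
      using assms by simp
    then show ?thesis
      by (simp only: ceiling_of_nat)
  qed
  then have "(\<Sum>i<k. \<lceil>real ((q - 1) * q ^ (k - 1)) / real q ^ i\<rceil>)
      = (\<Sum>i<k. int ((q - 1) * q ^ (k - Suc i)))"
    by simp
  also have "\<dots> = (\<Sum>i<k. int ((q - 1) * q ^ i))"
    by (rule sum.nat_diff_reindex)
  also have "\<dots> = (int q - 1) * (\<Sum>i<k. int q ^ i)"
    using assms by (simp add: sum_distrib_left of_nat_diff)
  also have "\<dots> = int (q ^ k - 1)"
    using assms by (simp add: power_diff_1_eq[symmetric] of_nat_diff)
  finally show ?thesis .
qed

lemma distance_optimal_simplex_parameters:
  fixes C :: "(nat \<Rightarrow> 'a::{field,finite}) set"
  assumes "is_nkd_code (CARD('a) ^ k - 1) k ((CARD('a) - 1) * CARD('a) ^ (k - 1)) C" and "k \<ge> 1"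
  shows "distance_optimal (CARD('a) ^ k - 1) k ((CARD('a) - 1) * CARD('a) ^ (k - 1)) C"
proof -
  let ?q = "CARD('a)"
  let ?X = "?q ^ (k - 1)"
  have q: "?q \<ge> 2"
    by (rule CARD_field_ge_2)
  have qk: "?q ^ k = ?q * ?X"
    using \<open>k \<ge> 1\<close> by (simp flip: power_Suc)
  have "\<not> is_nkd_code (?q ^ k - 1) k ((?q - 1) * ?X + 1) C'" for C' :: "(nat \<Rightarrow> 'a) set"
  proof
    assume "is_nkd_code (?q ^ k - 1) k ((?q - 1) * ?X + 1) C'"
    then have code: "linear_code (?q ^ k - 1) C'" and card: "card C' = ?q ^ k"
      and dist: "min_dist C' = (?q - 1) * ?X + 1"
      by (auto simp: is_nkd_code_def card_linear_code)
    have "?q * ((?q * ?X - 1) * ((?q - 1) * ?X + 1)) \<le> (?q * ?X - 1) * ((?q - 1) * (?q * ?X))"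
      using plotkin_bound[OF code] unfolding card dist qk .
    then have "(?q * ?X - 1) * (?q * ((?q - 1) * ?X + 1)) \<le> (?q * ?X - 1) * ((?q - 1) * (?q * ?X))"
      by (simp only: mult_ac)
    moreover have "(?q * ?X - 1) * ((?q - 1) * (?q * ?X)) < (?q * ?X - 1) * (?q * ((?q - 1) * ?X + 1))"
    proof (rule mult_strict_left_mono)
      have "?q * ((?q - 1) * ?X + 1) = (?q - 1) * (?q * ?X) + ?q"
        by (simp add: distrib_left mult_ac)
      then show "(?q - 1) * (?q * ?X) < ?q * ((?q - 1) * ?X + 1)"
        using q by linarith
      have "?X \<ge> 1"
        using q by simp
      with q have "2 * 1 \<le> ?q * ?X"
        by (rule mult_le_mono)
      then show "0 < ?q * ?X - 1"
        by linarith
    qed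
    ultimately show False
      by linarith
  qed
  then show ?thesis
    using assms(1) by (simp add: distance_optimal_def)
qed

section \<open>The code of a list of vectors\<close>

lemma cP_add: "cP P (u + v) = cP P u + cP P v"
  by (auto simp: cP_def fun_eq_iff dotp_add_left)

lemma cP_smult: "cP P (c *s v) = word_scale c (cP P v)"
  by (auto simp: cP_def fun_eq_iff dotp_smult_left word_scale_def)

lemma cP_eq_0_iff: "cP P v = 0 \<longleftrightarrow> (\<forall>d\<in>set P. dotp v d = 0)"
  unfolding cP_def fun_eq_iff by (metis in_set_conv_nth zero_fun_apply)

lemma hamming_wt_cP_eq_0_iff: "hamming_wt (cP P v) = 0 \<longleftrightarrow> cP P v = 0"
proof -
  have "finite {i. cP P v i \<noteq> 0}"
    by (rule finite_subset[of _ "{..<length P}"]) (auto simp: cP_def)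
  then show ?thesis
    by (auto simp: hamming_wt_def fun_eq_iff)
qed

lemma hamming_wt_cP:
  assumes "distinct P"
  shows "hamming_wt (cP P v) = card {d \<in> set P. dotp v d \<noteq> 0}"
proof -
  let ?I = "{i. i < length P \<and> dotp v (P ! i) \<noteq> 0}"
  have "{i. cP P v i \<noteq> 0} = ?I"
    by (auto simp: cP_def)
  moreover have "card (nth P ` ?I) = card ?I"
    by (rule card_image) (use inj_on_nth[OF assms] in simp)
  moreover have "nth P ` ?I = {d \<in> set P. dotp v d \<noteq> 0}"
    by (auto simp: in_set_conv_nth)
  ultimately show ?thesis
    unfolding hamming_wt_def by simp
qed

lemma cP_0: "cP P 0 = 0"
  by (simp add: cP_eq_0_iff)

lemma linear_code_CP: "linear_code (length P) (CP P)"
  unfolding linear_code_def CP_def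
proof (intro conjI ballI allI)
  show "range (cP P) \<subseteq> {c. \<forall>i\<ge>length P. c i = 0}"
    by (auto simp: cP_def)
  show "0 \<in> range (cP P)"
    by (metis cP_0 rangeI)
next
  fix x y assume "x \<in> range (cP P)" "y \<in> range (cP P)"
  then obtain u w where "x = cP P u" "y = cP P w"
    by blast
  then show "x + y \<in> range (cP P)"
    by (simp add: cP_add[symmetric])
next
  fix a x assume "x \<in> range (cP P)"
  then obtain u where "x = cP P u"
    by blast
  then show "word_scale a x \<in> range (cP P)"
    by (simp add: cP_smult[symmetric])
qed

lemma card_cP_preimage:
  fixes P :: "('a::{comm_ring_1,finite} ^ 'n::finite) list"
  shows "card {v. cP P v \<in> S} = card {v. cP P v = 0} * card (S \<inter> CP P)"
proof -
  have "card {v \<in> UNIV. cP P v \<in> S} = card {v \<in> UNIV. cP P v = 0} * card (S \<inter> cP P ` UNIV)"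
    by (rule card_preimage_additive) (simp_all add: cP_add)
  then show ?thesis
    by (simp add: CP_def)
qed

lemma card_weight_class_cP:
  fixes P :: "('a::{comm_ring_1,finite} ^ 'n::finite) list"
  shows "card {v. hamming_wt (cP P v) = i}
    = card {v. hamming_wt (cP P v) = 0} * card {c \<in> CP P. hamming_wt c = i}"
  using card_cP_preimage[of P "{c. hamming_wt c = i}"]
  by (simp add: hamming_wt_cP_eq_0_iff Int_def conj_commute)

context
  fixes P :: "('a::{field,finite} ^ 'n::finite) list" and L :: "'n set"
  assumes distinct_P: "distinct P" and set_P: "set P = coord_subspace L - {0}"
begin

lemma cP_eq_0_iff_vanishes_on: "cP P v = 0 \<longleftrightarrow> (\<forall>j\<in>L. v $ j = 0)"
proof
  assume "cP P v = 0"
  moreover have "axis j 1 \<in> set P" if "j \<in> L" for j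
    using that by (auto simp: set_P coord_subspace_def axis_def vec_eq_iff)
  ultimately show "\<forall>j\<in>L. v $ j = 0"
    by (metis cP_eq_0_iff dotp_axis_right mult_1_right)
next
  assume "\<forall>j\<in>L. v $ j = 0"
  then show "cP P v = 0"
    by (auto simp: cP_eq_0_iff set_P dotp_coord_subspace_eq_0)
qed

lemma hamming_wt_cP_coord_subspace:
  assumes "cP P v \<noteq> 0"
  shows "hamming_wt (cP P v) = (CARD('a) - 1) * CARD('a) ^ (card L - 1)"
proof -
  obtain j where "j \<in> L" "v $ j \<noteq> 0"
    using assms cP_eq_0_iff_vanishes_on by blast
  moreover have "{d \<in> set P. dotp v d \<noteq> 0} = {d \<in> coord_subspace L. dotp v d \<noteq> 0}"
    by (auto simp: set_P)
  ultimately show ?thesis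
    using hamming_wt_cP[OF distinct_P] card_coord_subspace_dotp_neq_0 by simp
qed

lemma hamming_wt_CP_coord_subspace:
  "c \<in> CP P \<Longrightarrow> c \<noteq> 0 \<Longrightarrow> hamming_wt c = (CARD('a) - 1) * CARD('a) ^ (card L - 1)"
  using hamming_wt_cP_coord_subspace by (auto simp: CP_def)

lemma length_list_coord_subspace: "length P = CARD('a) ^ card L - 1"
proof -
  have "0 \<in> (coord_subspace L :: ('a ^ 'n) set)"
    by (simp add: coord_subspace_def)
  then show ?thesis
    using distinct_card[OF distinct_P] by (simp add: set_P card_coord_subspace)
qed

lemma card_cP_kernel: "card {v. cP P v = 0} = CARD('a) ^ (CARD('n) - card L)"
proof -
  have "{v. cP P v = 0} = coord_subspace (UNIV - L)"
    by (auto simp: cP_eq_0_iff_vanishes_on coord_subspace_def)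
  then show ?thesis
    by (simp add: card_coord_subspace card_Diff_subset)
qed

lemma card_CP_coord_subspace: "card (CP P) = CARD('a) ^ card L"
proof -
  have "CARD('a) ^ (CARD('n) - card L) * CARD('a) ^ card L = CARD('a) ^ CARD('n)"
    by (simp flip: power_add add: card_mono)
  also have "\<dots> = CARD('a) ^ (CARD('n) - card L) * card (CP P)"
    using card_cP_preimage[of P UNIV] by (simp add: card_cP_kernel)
  finally show ?thesis
    by simp
qed

lemma code_dim_CP_coord_subspace: "code_dim (CP P) = card L"
proof -
  have "CARD('a) > 1"
    using CARD_field_ge_2[where 'a='a] by simp
  moreover have "CARD('a) ^ code_dim (CP P) = CARD('a) ^ card L"
    using card_linear_code[OF linear_code_CP[of P]] card_CP_coord_subspace by simp
  ultimately show ?thesis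
    by (simp add: power_inject_exp)
qed

lemma is_nkd_code_CP_coord_subspace:
  assumes "L \<noteq> {}"
  shows "is_nkd_code (CARD('a) ^ card L - 1) (card L) ((CARD('a) - 1) * CARD('a) ^ (card L - 1)) (CP P)"
proof -
  obtain j where "j \<in> L"
    using assms by blast
  then have "cP P (axis j 1) \<noteq> 0"
    by (simp add: cP_eq_0_iff_vanishes_on axis_def)
  moreover have "cP P (axis j 1) \<in> CP P"
    by (simp add: CP_def)
  ultimately have "min_dist (CP P) = (CARD('a) - 1) * CARD('a) ^ (card L - 1)"
    using min_dist_one_weight[OF linear_code_CP[of P] hamming_wt_CP_coord_subspace] by blast
  then show ?thesis
    using linear_code_CP[of P] length_list_coord_subspace code_dim_CP_coord_subspace by (simp add: is_nkd_code_def)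
qed

end

section \<open>The field with eight elements\<close>

text \<open>Translation by 1 permutes a finite ring, so it fixes the sum of all elements.\<close>
lemma of_nat_CARD_eq_0: "of_nat CARD('a) = (0::'a::{ring_1,finite})"
proof -
  have "(\<Sum>x\<in>UNIV. x) = (\<Sum>x\<in>UNIV. x + (1::'a))"
    by (rule sum.reindex_bij_witness[where i="\<lambda>x. x + 1" and j="\<lambda>x. x - 1"]) auto
  then show ?thesis
    by (simp add: sum.distrib)
qed

lemma two_eq_0_if_CARD_eq_8:
  assumes "CARD('a::{field,finite}) = 8"
  shows "(2::'a) = 0"
proof -
  have "(2::'a) ^ 3 = 0"
    using of_nat_CARD_eq_0[where 'a='a] assms by simp
  then show ?thesis
    by (metis power_not_zero)
qed

lemma F2_combination_eq_0_iff:
  fixes \<omega> :: "'a::field"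
  assumes two: "(2::'a) = 0" and \<omega>: "\<omega>^3 + \<omega> + 1 = 0"
    and "a \<in> {0, 1}" "b \<in> {0, 1}" "c \<in> {0, 1}"
  shows "a + \<omega> * b + \<omega>^2 * c = 0 \<longleftrightarrow> a = 0 \<and> b = 0 \<and> c = 0"
proof -
  have "\<omega> \<noteq> 0"
    using \<omega> by auto
  have "\<omega>^3 + \<omega> + 1 = (1 + \<omega>) * (\<omega> + \<omega>^2) + 1 - 2 * \<omega>^2"
    by (simp add: algebra_simps power2_eq_square power3_eq_cube)
  then have "1 + \<omega> \<noteq> 0"
    using \<omega> two by auto
  have "1 + \<omega>^2 = (1 + \<omega>)^2 - 2 * \<omega>"
    by (simp add: algebra_simps power2_eq_square)
  then have "1 + \<omega>^2 \<noteq> 0"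
    using \<open>1 + \<omega> \<noteq> 0\<close> two by simp
  have "\<omega> + \<omega>^2 = \<omega> * (1 + \<omega>)"
    by (simp add: algebra_simps power2_eq_square)
  then have "\<omega> + \<omega>^2 \<noteq> 0"
    using \<open>\<omega> \<noteq> 0\<close> \<open>1 + \<omega> \<noteq> 0\<close> by simp
  have "(1 + \<omega>) * (1 + \<omega> + \<omega>^2) = (\<omega>^3 + \<omega> + 1) + \<omega> + 2 * \<omega>^2"
    by (simp add: algebra_simps power2_eq_square power3_eq_cube)
  then have "1 + \<omega> + \<omega>^2 \<noteq> 0"
    using \<omega> two \<open>\<omega> \<noteq> 0\<close> by auto
  show ?thesis
    using assms(3-5) \<open>\<omega> \<noteq> 0\<close> \<open>1 + \<omega> \<noteq> 0\<close> \<open>1 + \<omega>^2 \<noteq> 0\<close> \<open>\<omega> + \<omega>^2 \<noteq> 0\<close>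
      \<open>1 + \<omega> + \<omega>^2 \<noteq> 0\<close>
    by auto
qed

lemma F8_eq_F2_combinations:
  fixes \<omega> :: "'a::{field,finite}"
  assumes card: "CARD('a) = 8" and \<omega>: "\<omega>^3 + \<omega> + 1 = 0"
  shows "(\<lambda>(a, b, c). a + \<omega> * b + \<omega>^2 * c) ` ({0, 1} \<times> {0, 1} \<times> {0, 1}) = UNIV"
proof -
  let ?B = "{0, 1::'a}"
  let ?comb = "\<lambda>(a, b, c). a + \<omega> * b + \<omega>^2 * c"
  have two: "(2::'a) = 0"
    using two_eq_0_if_CARD_eq_8[OF card] .
  have add_B: "a + a' \<in> ?B" if "a \<in> ?B" "a' \<in> ?B" for a a'
    using that two by auto
  have "inj_on ?comb (?B \<times> ?B \<times> ?B)"
  proof (rule inj_onI)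
    fix x y assume x: "x \<in> ?B \<times> ?B \<times> ?B" and y: "y \<in> ?B \<times> ?B \<times> ?B" and "?comb x = ?comb y"
    obtain a b c a' b' c' where xy: "x = (a, b, c)" "y = (a', b', c')"
      by (metis prod_cases3)
    have B: "a \<in> ?B" "b \<in> ?B" "c \<in> ?B" "a' \<in> ?B" "b' \<in> ?B" "c' \<in> ?B"
      using x y unfolding xy by blast+
    have eq: "a' + \<omega> * b' + \<omega>^2 * c' = a + \<omega> * b + \<omega>^2 * c"
      using \<open>?comb x = ?comb y\<close> unfolding xy by simp
    have "(a + a') + \<omega> * (b + b') + \<omega>^2 * (c + c')
        = (a + \<omega> * b + \<omega>^2 * c) + (a' + \<omega> * b' + \<omega>^2 * c')"
      by (simp add: algebra_simps)
    also have "\<dots> = 2 * (a + \<omega> * b + \<omega>^2 * c)"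
      unfolding eq by (rule mult_2[symmetric])
    also have "\<dots> = 0"
      using two by simp
    finally have "a + a' = 0 \<and> b + b' = 0 \<and> c + c' = 0"
      using F2_combination_eq_0_iff[OF two \<omega> add_B[OF B(1,4)] add_B[OF B(2,5)] add_B[OF B(3,6)]]
      by blast
    then show "x = y"
      using B unfolding xy by auto
  qed
  then have "card (?comb ` (?B \<times> ?B \<times> ?B)) = CARD('a)"
    using card by (simp add: card_image card_cartesian_product)
  then show ?thesis
    by (intro card_subset_eq) auto
qed

lemma sum3_Delta_eq_coord_subspace:
  fixes \<omega> :: "'a::comm_ring_1"
  assumes span: "(\<lambda>(a, b, c). a + \<omega> * b + \<omega>^2 * c) ` ({0, 1} \<times> {0, 1} \<times> {0, 1}) = UNIV"
  shows "sum3 \<omega> (Delta L) (Delta L) (Delta L) = (coord_subspace L :: ('a ^ 'n::finite) set)"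
proof (intro subset_antisym subsetI)
  fix v assume "v \<in> sum3 \<omega> (Delta L) (Delta L) (Delta L)"
  then obtain a b c where abc: "a \<in> Delta L" "b \<in> Delta L" "c \<in> Delta L"
    and v: "v = (\<chi> i. a $ i + \<omega> * b $ i + \<omega>^2 * c $ i)"
    unfolding sum3_def by blast
  have "v $ i = 0" if "i \<notin> L" for i
  proof -
    have "a $ i = 0" "b $ i = 0" "c $ i = 0"
      using abc that by (auto simp: Delta_def)
    then show ?thesis
      by (simp add: v)
  qed
  then show "v \<in> coord_subspace L"
    by (simp add: coord_subspace_def)
next
  let ?B = "{0, 1::'a}"
  let ?comb = "\<lambda>(a, b, c). a + \<omega> * b + \<omega>^2 * c"
  define R where "R = inv_into (?B \<times> ?B \<times> ?B) ?comb"
  have "R x \<in> ?B \<times> ?B \<times> ?B" for x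
    unfolding R_def by (rule inv_into_into) (simp only: span UNIV_I)
  then have R: "fst (R x) \<in> ?B" "fst (snd (R x)) \<in> ?B" "snd (snd (R x)) \<in> ?B" for x
    by (simp_all only: mem_Times_iff)
  have "?comb (R x) = x" for x
    unfolding R_def by (rule f_inv_into_f) (simp only: span UNIV_I)
  then have R_comb: "fst (R x) + \<omega> * fst (snd (R x)) + \<omega>^2 * snd (snd (R x)) = x" for x
    by (simp only: split_beta)
  fix v :: "'a ^ 'n" assume v: "v \<in> coord_subspace L"
  define a where "a = (\<chi> i. if i \<in> L then fst (R (v $ i)) else 0)"
  define b where "b = (\<chi> i. if i \<in> L then fst (snd (R (v $ i))) else 0)"
  define c where "c = (\<chi> i. if i \<in> L then snd (snd (R (v $ i))) else 0)"
  have "a \<in> Delta L" "b \<in> Delta L" "c \<in> Delta L"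
    using R by (auto simp: Delta_def a_def b_def c_def)
  moreover have "v = (\<chi> i. a $ i + \<omega> * b $ i + \<omega>^2 * c $ i)"
    using v R_comb by (auto simp: vec_eq_iff coord_subspace_def a_def b_def c_def)
  ultimately show "v \<in> sum3 \<omega> (Delta L) (Delta L) (Delta L)"
    unfolding sum3_def by blast
qed

theorem mainTheorem4:
  fixes \<omega> :: "'a::{field,finite}" and L :: "'n::finite set" and P :: "('a ^ 'n) list"
  assumes "CARD('a) = 8"
    and "\<omega>^3 + \<omega> + 1 = 0"
    and "L \<noteq> {}" and "L \<noteq> UNIV"
    and "distinct P"
    and "set P = sum3 \<omega> (Delta L) (Delta L) (Delta L) - {0}"
  shows "one_weight (CP P)
    \<and> is_nkd_code (2^(3 * card L) - 1) (card L) (7 * 2^(3 * (card L - 1))) (CP P)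
    \<and> length P = 2^(3 * card L) - 1
    \<and> minimal_code (CP P)
    \<and> griesmer_code (2^(3 * card L) - 1) (card L) (7 * 2^(3 * (card L - 1))) (CP P)
    \<and> distance_optimal (2^(3 * card L) - 1) (card L) (7 * 2^(3 * (card L - 1))) (CP P)
    \<and> card {v. hamming_wt (cP P v) = 0} = 2^(3 * (CARD('n) - card L))
    \<and> (\<forall>i\<le>length P. card {v. hamming_wt (cP P v) = i}
          = card {v. hamming_wt (cP P v) = 0} * card {c\<in>CP P. hamming_wt c = i})"
proof -
  let ?q = "CARD('a)" and ?k = "card L"
  have "sum3 \<omega> (Delta L) (Delta L) (Delta L) = coord_subspace L"
    by (rule sum3_Delta_eq_coord_subspace) (rule F8_eq_F2_combinations[OF assms(1,2)])
  with assms(6) have set_P: "set P = coord_subspace L - {0}"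
    by simp
  have n: "2^(3 * ?k) - 1 = ?q ^ ?k - 1" and d: "7 * 2^(3 * (?k - 1)) = (?q - 1) * ?q ^ (?k - 1)"
    and z: "2^(3 * (CARD('n) - ?k)) = ?q ^ (CARD('n) - ?k)"
    using assms(1) by (simp_all add: power_mult)
  have code: "is_nkd_code (?q ^ ?k - 1) ?k ((?q - 1) * ?q ^ (?k - 1)) (CP P)"
    using is_nkd_code_CP_coord_subspace[OF assms(5) set_P assms(3)] .
  have one_weight: "one_weight (CP P)"
    using hamming_wt_CP_coord_subspace[OF assms(5) set_P] by (auto simp: one_weight_def)
  have "?k \<ge> 1"
    using assms(3) by (simp add: Suc_le_eq card_gt_0_iff)
  have griesmer: "griesmer_code (?q ^ ?k - 1) ?k ((?q - 1) * ?q ^ (?k - 1)) (CP P)"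
    using code griesmer_sum_simplex[of ?q ?k] by (simp add: griesmer_code_def)
  have kernel: "card {v. hamming_wt (cP P v) = 0} = ?q ^ (CARD('n) - ?k)"
    using card_cP_kernel[OF assms(5) set_P] by (simp add: hamming_wt_cP_eq_0_iff)
  show ?thesis
    unfolding n d z
    using code one_weight minimal_code_if_one_weight[OF linear_code_CP one_weight] griesmer
      distance_optimal_simplex_parameters[OF code \<open>?k \<ge> 1\<close>] length_list_coord_subspace[OF assms(5) set_P]
      kernel card_weight_class_cP[of P]
    by blast
qed
end
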